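(* Let $X,Y$ be finite sets with $Y\ne\emptyset$, and let $A\in\mathbb{Z}^{X\times Y}$ be an integer matrix with no all-zero columns. Then there exist a partition $Y=\bigcup_{i=1}^kS_i$ into nonempty sets, rows $x_1,\dots,x_k\in X$ and nonzero integers $b_1,\dots,b_k\in\mathbb{Z}\setminus\{0\}$ such that (i) for every $1\le i\le k$, $A(x_i,y)=b_i$ for all $y\in S_i$; and (ii) for every $\delta>0$, every $x\in X$ and every $b\in\mathbb{Z}\setminus\{0\}$, the number of indices $1\le i\le k$ with $$\Pr_{y\in S_i}\bigl[A(x,y)=b\bigr]\ge\delta$$ (with $y$ uniform in $S_i$) is at most $(\log|Y|+1)/\delta$, where $\log$ is the natural logarithm. *)

theory Defs
  imports "HOL-Analysis.Analysis"
begin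

end

theory Submission
  imports Defs
begin

text \<open>The blocks are chosen greedily: each is a largest nonempty level set
  \<open>{y. A x y = c}\<close>, \<open>c \<noteq> 0\<close>, of a row restricted to the still uncovered columns.
  Fix \<open>x\<close>, \<open>c\<close>, \<open>\<delta>\<close> and let \<open>t\<close> count the uncovered columns \<open>y\<close> with \<open>A x y = c\<close>.
  By maximality the next block has at least \<open>t\<close> elements, so if a \<open>\<delta>\<close>-fraction of it
  lies in that level set, \<open>t\<close> shrinks to at most \<open>(1 - \<delta>) t \<le> exp (-\<delta>) t\<close>. Hence the
  potential \<open>(ln t + 1) / \<delta>\<close> (read as \<open>0\<close> for \<open>t = 0\<close>) never increases and drops by
  at least one at every such block.\<close>

definition uncovered :: "'b set \<Rightarrow> (nat \<Rightarrow> 'b set) \<Rightarrow> nat \<Rightarrow> 'b set" where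
  "uncovered Y S i = Y - (\<Union>j\<in>{1..<i}. S j)"

lemma uncovered_Suc:
  assumes "1 \<le> i"
  shows "uncovered Y S (Suc i) = uncovered Y S i - S i"
proof -
  have "{1..<Suc i} = insert i {1..<i}"
    using assms by auto
  then show ?thesis
    by (auto simp: uncovered_def)
qed

lemma uncovered_fun_upd: "i \<le> j \<Longrightarrow> uncovered Y (S(j := T)) i = uncovered Y S i"
  unfolding uncovered_def by (intro arg_cong2[where f = minus] refl SUP_cong) auto

lemma uncovered_subset: "uncovered Y S i \<subseteq> Y"
  by (simp add: uncovered_def)

lemma disjoint_if_subset_uncovered:
  assumes "\<forall>i\<in>{1..k}. S i \<subseteq> uncovered Y S i"
    and "i \<in> {1..k}" "j \<in> {1..k}" "i \<noteq> j"
  shows "S i \<inter> S j = {}"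
proof -
  have earlier: "S i \<inter> S j = {}" if "i \<in> {1..<j}" "j \<in> {1..k}" for i j
  proof -
    have "S i \<subseteq> (\<Union>l\<in>{1..<j}. S l)"
      using that(1) by blast
    moreover have "S j \<subseteq> Y - (\<Union>l\<in>{1..<j}. S l)"
      using assms(1) that(2) unfolding uncovered_def by blast
    ultimately show ?thesis
      by blast
  qed
  show ?thesis
  proof (cases "i < j")
    case True
    then show ?thesis using earlier assms(2,3) by simp
  next
    case False
    with \<open>i \<noteq> j\<close> have "j < i" by simp
    then show ?thesis using earlier[of j i] assms(2,3) by (simp add: Int_commute)
  qed
qed

lemma ln_add_le_ln_if_le_one_minus:
  fixes u t \<delta> :: real
  assumes "0 < u" "u \<le> (1 - \<delta>) * t" "0 \<le> t"
  shows "ln u + \<delta> \<le> ln t"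
proof -
  have "t > 0"
    using assms by (cases "t = 0") auto
  have "(1 - \<delta>) * t \<le> exp (- \<delta>) * t"
    using assms(3) exp_ge_add_one_self[of "- \<delta>"] by (intro mult_right_mono) simp_all
  with assms(1,2) have "ln u \<le> ln (exp (- \<delta>) * t)"
    by simp
  also have "\<dots> = ln t - \<delta>"
    using \<open>t > 0\<close> by (simp add: ln_mult)
  finally show ?thesis
    by simp
qed

definition heavy_bound :: "real \<Rightarrow> nat \<Rightarrow> real" where
  "heavy_bound \<delta> t = (if t = 0 then 0 else (ln t + 1) / \<delta>)"

lemma heavy_bound_mono:
  assumes "\<delta> > 0" "t' \<le> t"
  shows "heavy_bound \<delta> t' \<le> heavy_bound \<delta> t"
  using assms by (auto simp: heavy_bound_def divide_right_mono)

lemma heavy_bound_add_one_le: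
  fixes m t' s :: nat and \<delta> :: real
  assumes "\<delta> > 0" "m > 0" "\<delta> * s \<le> m" "m + t' \<le> s"
  shows "heavy_bound \<delta> t' + 1 \<le> heavy_bound \<delta> (m + t')"
proof (cases "t' = 0")
  case True
  have "s > 0"
    using assms(2,4) by simp
  have "\<delta> * s \<le> 1 * real s"
    using assms(3,4) by simp
  then have "\<delta> \<le> 1"
    using \<open>s > 0\<close> by (metis mult_right_le_imp_le of_nat_0_less_iff)
  moreover have "0 \<le> ln (real m)"
    using \<open>m > 0\<close> by simp
  ultimately have "\<delta> \<le> ln m + 1"
    by linarith
  then show ?thesis
    using True assms(1,2) by (simp add: heavy_bound_def le_divide_eq_1_pos)
next
  case False
  have "\<delta> * (m + t') \<le> \<delta> * s"
    using assms by (intro mult_left_mono) auto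
  then have "real t' \<le> (1 - \<delta>) * real (m + t')"
    using assms(3) by (simp add: algebra_simps)
  then have "ln t' + \<delta> \<le> ln (m + t')"
    using False by (intro ln_add_le_ln_if_le_one_minus) auto
  have "(ln t' + 1) / \<delta> + 1 = (ln t' + \<delta> + 1) / \<delta>"
    using assms(1) by (simp add: field_simps)
  also have "\<dots> \<le> (ln (m + t') + 1) / \<delta>"
    using \<open>ln t' + \<delta> \<le> ln (m + t')\<close> assms(1) by (intro divide_right_mono) auto
  finally show ?thesis
    using False by (simp add: heavy_bound_def)
qed

lemma heavy_bound_step:
  fixes m t' s :: nat and \<delta> :: real
  assumes "\<delta> > 0" "m + t' \<le> s"
  shows "heavy_bound \<delta> t' + (if \<delta> \<le> m / s then 1 else 0) \<le> heavy_bound \<delta> (m + t')"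
proof (cases "\<delta> \<le> m / s")
  case False
  then show ?thesis
    using heavy_bound_mono[OF assms(1)] by simp
next
  case True
  with assms(1) have "0 < real m / real s"
    by linarith
  then have "m > 0" "s > 0"
    by (auto simp: zero_less_divide_iff)
  with True have "\<delta> * s \<le> m"
    by (simp add: pos_le_divide_eq)
  with True assms \<open>m > 0\<close> show ?thesis
    using heavy_bound_add_one_le by simp
qed

lemma card_filter_atLeastAtMost_Suc:
  "card {i\<in>{1..Suc k}. Q i} = card {i\<in>{1..k}. Q i} + (if Q (Suc k) then 1 else 0)"
proof (cases "Q (Suc k)")
  case True
  then have "{i\<in>{1..Suc k}. Q i} = insert (Suc k) {i\<in>{1..k}. Q i}"
    by auto
  then show ?thesis
    using True by simp
next
  case False
  then have "{i\<in>{1..Suc k}. Q i} = {i\<in>{1..k}. Q i}"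
    using le_Suc_eq by auto
  then show ?thesis
    using False by simp
qed

lemma card_heavy_blocks_le:
  fixes S :: "nat \<Rightarrow> 'b set" and P :: "'b \<Rightarrow> bool" and \<delta> :: real
  assumes "\<delta> > 0" "finite Y"
    and "\<forall>i\<in>{1..k}. S i \<subseteq> uncovered Y S i"
    and "\<forall>i\<in>{1..k}. card {y \<in> uncovered Y S i. P y} \<le> card (S i)"
  shows "real (card {i\<in>{1..k}. real (card {y\<in>S i. P y}) / real (card (S i)) \<ge> \<delta>})
           + heavy_bound \<delta> (card {y \<in> uncovered Y S (Suc k). P y})
         \<le> heavy_bound \<delta> (card {y\<in>Y. P y})"
  using assms(3,4)
proof (induction k)
  case 0
  then show ?case by (simp add: uncovered_def)
next
  case (Suc k)
  define R where "R = uncovered Y S (Suc k)"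
  define m where "m = card {y\<in>S (Suc k). P y}"
  define t' where "t' = card {y \<in> uncovered Y S (Suc (Suc k)). P y}"
  have "S (Suc k) \<subseteq> R"
    using Suc.prems(1) by (simp add: R_def)
  moreover have "finite R"
    unfolding R_def by (rule finite_subset[OF uncovered_subset assms(2)])
  moreover have "uncovered Y S (Suc (Suc k)) = R - S (Suc k)"
    by (simp add: R_def uncovered_Suc)
  ultimately have "card {y\<in>R. P y} = m + t'"
    unfolding m_def t'_def
    by (subst card_Un_disjoint[symmetric]) (auto intro: finite_subset arg_cong[where f = card])
  moreover have "card {y\<in>R. P y} \<le> card (S (Suc k))"
    using Suc.prems(2) by (simp add: R_def)
  ultimately have "heavy_bound \<delta> t' + (if \<delta> \<le> m / card (S (Suc k)) then 1 else 0)
      \<le> heavy_bound \<delta> (card {y\<in>R. P y})"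
    using heavy_bound_step[OF assms(1)] by simp
  moreover have "real (card {i\<in>{1..k}. real (card {y\<in>S i. P y}) / real (card (S i)) \<ge> \<delta>})
      + heavy_bound \<delta> (card {y\<in>R. P y}) \<le> heavy_bound \<delta> (card {y\<in>Y. P y})"
    using Suc by (simp add: R_def)
  ultimately show ?case
    unfolding card_filter_atLeastAtMost_Suc m_def t'_def by (auto split: if_splits)
qed

definition is_largest_level_set :: "'a set \<Rightarrow> ('a \<Rightarrow> 'b \<Rightarrow> int) \<Rightarrow> 'b set \<Rightarrow> 'a \<Rightarrow> int \<Rightarrow> bool" where
  "is_largest_level_set X A R x c \<longleftrightarrow> x \<in> X \<and> c \<noteq> 0 \<and> {y\<in>R. A x y = c} \<noteq> {} \<and>
     (\<forall>x'\<in>X. \<forall>c'. c' \<noteq> 0 \<longrightarrow> card {y\<in>R. A x' y = c'} \<le> card {y\<in>R. A x y = c})"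

lemma largest_level_set_exists:
  assumes "finite X" "finite R" "R \<noteq> {}" "\<forall>y\<in>R. \<exists>x\<in>X. A x y \<noteq> 0"
  obtains x c where "is_largest_level_set X A R x c"
proof -
  define levels where "levels = (\<lambda>(x, y). (x, A x y)) ` {(x, y) \<in> X \<times> R. A x y \<noteq> 0}"
  define level_size where "level_size = (\<lambda>(x, c). card {y\<in>R. A x y = c})"
  have "finite {(x, y) \<in> X \<times> R. A x y \<noteq> 0}"
    using assms(1,2) by (rule finite_subset[rotated, OF finite_cartesian_product]) auto
  then have "finite levels"
    unfolding levels_def by (rule finite_imageI)
  obtain y0 x0 where "y0 \<in> R" "x0 \<in> X" "A x0 y0 \<noteq> 0"
    using assms(3,4) by blast
  then have "(x0, A x0 y0) \<in> levels"
    unfolding levels_def by (intro image_eqI[where x = "(x0, y0)"]) auto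
  then have "levels \<noteq> {}"
    by blast
  from \<open>finite levels\<close> this
  obtain x c where xc: "(x, c) \<in> levels" and max: "Max (level_size ` levels) = level_size (x, c)"
    by (metis obtains_MAX surj_pair)
  have "card {y\<in>R. A x' y = c'} \<le> card {y\<in>R. A x y = c}" if "x' \<in> X" "c' \<noteq> 0" for x' c'
  proof (cases "{y\<in>R. A x' y = c'} = {}")
    case False
    then have "(x', c') \<in> levels"
      using that unfolding levels_def by force
    then have "level_size (x', c') \<le> level_size (x, c)"
      unfolding max[symmetric] using \<open>finite levels\<close> by simp
    then show ?thesis
      by (simp add: level_size_def)
  next
    case True
    then show ?thesis
      by (metis card.empty zero_le)
  qed
  with xc have "is_largest_level_set X A R x c"
    unfolding is_largest_level_set_def levels_def by auto
  then show ?thesis ..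
qed

definition greedy_blocks ::
  "'a set \<Rightarrow> ('a \<Rightarrow> 'b \<Rightarrow> int) \<Rightarrow> 'b set \<Rightarrow> nat \<Rightarrow> (nat \<Rightarrow> 'b set) \<Rightarrow> (nat \<Rightarrow> 'a) \<Rightarrow> (nat \<Rightarrow> int) \<Rightarrow> bool"
where
  "greedy_blocks X A Y k S xr b \<longleftrightarrow> (\<forall>i\<in>{1..k}.
     is_largest_level_set X A (uncovered Y S i) (xr i) (b i) \<and>
     S i = {y \<in> uncovered Y S i. A (xr i) y = b i})"

lemma greedy_blocks_0: "greedy_blocks X A Y 0 S xr b"
  by (simp add: greedy_blocks_def)

lemma greedy_blocksD:
  assumes "greedy_blocks X A Y k S xr b" "i \<in> {1..k}"
  shows "S i \<subseteq> uncovered Y S i" "S i \<noteq> {}" "xr i \<in> X" "b i \<noteq> 0" "\<forall>y\<in>S i. A (xr i) y = b i"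
    and "\<forall>x\<in>X. \<forall>c. c \<noteq> 0 \<longrightarrow> card {y \<in> uncovered Y S i. A x y = c} \<le> card (S i)"
  using assms unfolding greedy_blocks_def is_largest_level_set_def by auto

lemma greedy_blocks_snoc:
  assumes "greedy_blocks X A Y k S xr b"
    and "is_largest_level_set X A (uncovered Y S (Suc k)) x c"
  shows "greedy_blocks X A Y (Suc k) (S(Suc k := {y \<in> uncovered Y S (Suc k). A x y = c}))
           (xr(Suc k := x)) (b(Suc k := c))"
  using assms unfolding greedy_blocks_def
  by (auto simp: uncovered_fun_upd le_Suc_eq)

lemma greedy_blocks_complete:
  assumes "finite X" "finite Y" "\<forall>y\<in>Y. \<exists>x\<in>X. A x y \<noteq> 0"
    and "greedy_blocks X A Y k S xr b"
  shows "\<exists>k' S' xr' b'. greedy_blocks X A Y k' S' xr' b' \<and> uncovered Y S' (Suc k') = {}"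
  using assms(4)
proof (induction "card (uncovered Y S (Suc k))" arbitrary: k S xr b rule: less_induct)
  case less
  define R where "R = uncovered Y S (Suc k)"
  have "R \<subseteq> Y"
    unfolding R_def by (rule uncovered_subset)
  then have "finite R"
    using assms(2) by (rule finite_subset)
  show ?case
  proof (cases "R = {}")
    case True
    with less.prems show ?thesis
      unfolding R_def by blast
  next
    case False
    moreover have "\<forall>y\<in>R. \<exists>x\<in>X. A x y \<noteq> 0"
      using assms(3) \<open>R \<subseteq> Y\<close> by blast
    ultimately obtain x c where xc: "is_largest_level_set X A R x c"
      using largest_level_set_exists[OF assms(1) \<open>finite R\<close>] by blast
    define S' where "S' = S(Suc k := {y \<in> R. A x y = c})"
    have greedy': "greedy_blocks X A Y (Suc k) S' (xr(Suc k := x)) (b(Suc k := c))"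
      using greedy_blocks_snoc[OF less.prems] xc unfolding S'_def R_def by blast
    have "uncovered Y S' (Suc (Suc k)) = R - {y \<in> R. A x y = c}"
      by (simp add: uncovered_Suc uncovered_fun_upd S'_def R_def)
    then have "card (uncovered Y S' (Suc (Suc k))) < card (uncovered Y S (Suc k))"
      using xc \<open>finite R\<close> unfolding is_largest_level_set_def R_def[symmetric]
      by (intro psubset_card_mono) auto
    from less.hyps[OF this greedy'] show ?thesis .
  qed
qed

theorem lemma4p3:
  fixes X :: "'a set" and Y :: "'b set" and A :: "'a \<Rightarrow> 'b \<Rightarrow> int"
  assumes "finite X" and "finite Y" and "Y \<noteq> {}"
    and "\<forall>y\<in>Y. \<exists>x\<in>X. A x y \<noteq> 0"
  shows "\<exists>(k::nat) (S :: nat \<Rightarrow> 'b set) (xr :: nat \<Rightarrow> 'a) (b :: nat \<Rightarrow> int).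
           (\<Union>i\<in>{1..k}. S i) = Y
         \<and> (\<forall>i\<in>{1..k}. S i \<noteq> {})
         \<and> (\<forall>i\<in>{1..k}. \<forall>j\<in>{1..k}. i \<noteq> j \<longrightarrow> S i \<inter> S j = {})
         \<and> (\<forall>i\<in>{1..k}. xr i \<in> X \<and> b i \<noteq> 0)
         \<and> (\<forall>i\<in>{1..k}. \<forall>y\<in>S i. A (xr i) y = b i)
         \<and> (\<forall>(\<delta>::real) > 0. \<forall>x\<in>X. \<forall>c::int. c \<noteq> 0 \<longrightarrow>
              real (card {i\<in>{1..k}. real (card {y\<in>S i. A x y = c}) / real (card (S i)) \<ge> \<delta>})
                \<le> (ln (real (card Y)) + 1) / \<delta>)"
proof -
  obtain k S xr b where greedy: "greedy_blocks X A Y k S xr b" and covered: "uncovered Y S (Suc k) = {}"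
    using greedy_blocks_complete[OF assms(1,2,4) greedy_blocks_0] by blast
  note blocks = greedy_blocksD[OF greedy]
  have "(\<Union>i\<in>{1..k}. S i) = Y"
    using covered blocks(1) uncovered_subset
    unfolding uncovered_def atLeastLessThanSuc_atLeastAtMost by blast
  moreover have "real (card {i\<in>{1..k}. real (card {y\<in>S i. A x y = c}) / real (card (S i)) \<ge> \<delta>})
      \<le> (ln (real (card Y)) + 1) / \<delta>" if "\<delta> > 0" "x \<in> X" "c \<noteq> 0" for \<delta> x c
  proof -
    have "real (card {i\<in>{1..k}. real (card {y\<in>S i. A x y = c}) / real (card (S i)) \<ge> \<delta>})
        \<le> heavy_bound \<delta> (card {y\<in>Y. A x y = c})"
      using card_heavy_blocks_le[OF that(1) assms(2), of k S] blocks(1,6) that covered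
      by (simp add: heavy_bound_def)
    also have "\<dots> \<le> heavy_bound \<delta> (card Y)"
      using that(1) assms(2) by (intro heavy_bound_mono card_mono) auto
    also have "\<dots> = (ln (real (card Y)) + 1) / \<delta>"
      using assms(2,3) by (simp add: heavy_bound_def)
    finally show ?thesis .
  qed
  ultimately show ?thesis
    using blocks(2-5) disjoint_if_subset_uncovered[of k S Y] blocks(1)
    by (intro exI[of _ k] exI[of _ S] exI[of _ xr] exI[of _ b]) auto
qed

end
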